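(* Let $X$ be convex and let $f$ be $\alpha$-robustly quasiconvex for some $\alpha>0$, with $X\subset\operatorname{dom}f$. Then $\mathrm{Sol}(\cdot)$ is lower semicontinuous at $0$ if and only if (a) $\mathrm{Sol}(0)$ is a singleton and (b) $X^\infty\cap\mathcal{K}_q(f)=\{0\}$.
   Context: Standing assumptions: $f:\mathbb{R}^n\to\mathbb{R}\cup\{\pm\infty\}$ is proper (never $-\infty$ and finite at some point) and lower semicontinuous; $X\subset\mathbb{R}^n$ is a nonempty closed set with $\operatorname{dom}f\cap X$ unbounded. $f$ is $\alpha$-robustly quasiconvex ($\alpha\ge0$) if $x\mapsto f(x)+\langle u,x\rangle$ is quasiconvex for every $u$ in the open ball $\mathbb{B}_\alpha$ of radius $\alpha$ about $0$ (quasiconvex: $g(\lambda x+(1-\lambda)y)\le\max\{g(x),g(y)\}$ for $x,y\in\operatorname{dom}g$, $\lambda\in[0,1]$). $X^\infty=\{u:\exists t_k\to+\infty,\ \exists x_k\in X,\ x_k/t_k\to u\}$. $f^\infty_q(u)=\sup_{x\in\operatorname{dom}f}\sup_{t>0}\frac{f(x+tu)-f(x)}{t}$, $\mathcal{K}_q(f)=\{d: f^\infty_q(d)\le0\}$. $f_u(x)=f(x)-\langle u,x\rangle$, $\mathrm{Sol}(u)=\{x\in X: f_u(x)\le f_u(y)\ \forall y\in X\}$. A set-valued map $F$ is lower semicontinuous at $\bar u$ if $F(\bar u)\ne\emptyset$ and for every open $V$ with $F(\bar u)\cap V\ne\emptyset$ there is a neighborhood $U$ of $\bar u$ with $F(u)\cap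 V\ne\emptyset$ for all $u\in U$. *)

theory Defs
  imports "HOL-Analysis.Analysis" "HOL-Library.Extended_Real"
begin

definition proper_fun :: "('a \<Rightarrow> ereal) \<Rightarrow> bool" where
  "proper_fun f \<longleftrightarrow> (\<forall>x. f x \<noteq> -\<infinity>) \<and> (\<exists>x. f x \<noteq> \<infinity>)"

definition lsc_fun :: "('a::topological_space \<Rightarrow> ereal) \<Rightarrow> bool" where
  "lsc_fun f \<longleftrightarrow> (\<forall>x. f x \<le> Liminf (at x) f)"

definition edom :: "('a \<Rightarrow> ereal) \<Rightarrow> 'a set" where
  "edom f = {x. f x < \<infinity>}"

definition quasiconvex_fun :: "('a::real_vector \<Rightarrow> ereal) \<Rightarrow> bool" where
  "quasiconvex_fun g \<longleftrightarrow>
     (\<forall>x\<in>edom g. \<forall>y\<in>edom g. \<forall>l::real. 0 \<le> l \<and> l \<le> 1 \<longrightarrow>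
        g (l *\<^sub>R x + (1 - l) *\<^sub>R y) \<le> max (g x) (g y))"

definition robustly_quasiconvex :: "real \<Rightarrow> ('a::real_inner \<Rightarrow> ereal) \<Rightarrow> bool" where
  "robustly_quasiconvex \<alpha> f \<longleftrightarrow> \<alpha> \<ge> 0 \<and>
     (\<forall>u\<in>ball 0 \<alpha>. quasiconvex_fun (\<lambda>x. f x + ereal (inner u x)))"

definition asymptotic_cone :: "'a::real_normed_vector set \<Rightarrow> 'a set" where
  "asymptotic_cone X = {u. \<exists>t x. filterlim t at_top sequentially \<and> (\<forall>k. x k \<in> X) \<and>
        ((\<lambda>k. (1 / t k) *\<^sub>R x k) \<longlonglongrightarrow> u)}"

definition q_asymptotic :: "('a::real_vector \<Rightarrow> ereal) \<Rightarrow> 'a \<Rightarrow> ereal" where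
  "q_asymptotic f u = (SUP x\<in>edom f. SUP t\<in>{0::real<..}. (f (x + t *\<^sub>R u) - f x) / ereal t)"

definition Kq :: "('a::real_vector \<Rightarrow> ereal) \<Rightarrow> 'a set" where
  "Kq f = {d. q_asymptotic f d \<le> 0}"

definition f_tilt :: "('a::real_inner \<Rightarrow> ereal) \<Rightarrow> 'a \<Rightarrow> 'a \<Rightarrow> ereal" where
  "f_tilt f u x = f x - ereal (inner u x)"

definition Sol :: "('a::real_inner \<Rightarrow> ereal) \<Rightarrow> 'a set \<Rightarrow> 'a \<Rightarrow> 'a set" where
  "Sol f X u = {x\<in>X. \<forall>y\<in>X. f_tilt f u x \<le> f_tilt f u y}"

definition lsc_setvalued_at :: "('b::topological_space \<Rightarrow> 'a::topological_space set) \<Rightarrow> 'b \<Rightarrow> bool" where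
  "lsc_setvalued_at F ub \<longleftrightarrow> F ub \<noteq> {} \<and>
     (\<forall>V. open V \<and> F ub \<inter> V \<noteq> {} \<longrightarrow>
        (\<exists>U. open U \<and> ub \<in> U \<and> (\<forall>u\<in>U. F u \<inter> V \<noteq> {})))"

end

theory Submission
  imports Defs
begin

(* Forward direction: tilting moves minimizers monotonically, 0 \<le> \<langle>u - v, y - x\<rangle> for
   x \<in> Sol v and y \<in> Sol u, so lower semicontinuity at 0 along u = \<epsilon>(x1 - x2) rules out two
   distinct minimizers; and for 0 \<noteq> d \<in> X\<^sup>\<infinity> \<inter> K_q(f) the tilt f_u with u = \<epsilon>d decreases at
   rate \<epsilon>|d|\<^sup>2 along the rays y + td, so Sol(\<epsilon>d) is empty.
   Backward direction: the tilts f_v with |v| < \<alpha> are quasiconvex. If the sets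
   {y \<in> X. f_u y \<le> f_u z} were not uniformly bounded for small u, normalizing a divergent sequence
   in them would give a unit direction d \<in> X\<^sup>\<infinity>, and quasiconvexity plus lower semicontinuity of
   the tilt by \<beta>d would give f(x + td) \<le> f(x) + \<beta>t for all small \<beta> > 0, i.e. d \<in> K_q(f).
   So minimizers of f_u exist in a fixed ball for small u, and the closed graph of Sol together
   with uniqueness at 0 yields lower semicontinuity. *)

lemma lsc_fun_iff_open_superlevels:
  fixes f :: "'a::topological_space \<Rightarrow> ereal"
  shows "lsc_fun f \<longleftrightarrow> (\<forall>c. open {x. c < f x})"
proof
  assume lsc: "lsc_fun f"
  show "\<forall>c. open {x. c < f x}"
  proof (intro allI Topological_Spaces.openI)
    fix c x assume x: "x \<in> {x. c < f x}"
    then have "c < Liminf (at x) f"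
      using lsc unfolding lsc_fun_def by (auto intro: order_less_le_trans)
    then have "eventually (\<lambda>w. c < f w) (at x)" by (rule less_LiminfD)
    then obtain T where "open T" "x \<in> T" and T: "\<forall>w\<in>T. w \<noteq> x \<longrightarrow> c < f w"
      unfolding eventually_at_topological by auto
    moreover have "T \<subseteq> {x. c < f x}" using T x by auto
    ultimately show "\<exists>T. open T \<and> x \<in> T \<and> T \<subseteq> {x. c < f x}" by blast
  qed
next
  assume superlevels: "\<forall>c. open {x. c < f x}"
  show "lsc_fun f" unfolding lsc_fun_def le_Liminf_iff
  proof (intro allI impI)
    fix x y assume "y < f x"
    then have "eventually (\<lambda>w. w \<in> {w. y < f w}) (nhds x)"
      using superlevels by (intro eventually_nhds_in_open) auto
    then show "eventually (\<lambda>w. y < f w) (at x)"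
      unfolding eventually_at_filter by (auto elim: eventually_mono)
  qed
qed

lemma lsc_fun_add_continuous:
  fixes f :: "'a::topological_space \<Rightarrow> ereal"
  assumes "lsc_fun f" and "continuous_on UNIV h"
  shows "lsc_fun (\<lambda>x. f x + ereal (h x))"
proof -
  have "open {x. c < f x + ereal (h x)}" for c
  proof (rule Topological_Spaces.openI)
    fix x assume "x \<in> {x. c < f x + ereal (h x)}"
    then have "c - ereal (h x) < f x" by (simp add: ereal_minus_less)
    then obtain e where e: "c - ereal (h x) < ereal e" "ereal e < f x"
      using ereal_dense2 by blast
    define T where "T = {w. ereal e < f w} \<inter> {w. c < ereal (e + h w)}"
    have "open {w. c < ereal (e + h w)}"
      by (intro open_Collect_less continuous_intros assms(2))
    then have "open T"
      unfolding T_def using assms(1) by (auto simp: lsc_fun_iff_open_superlevels)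
    moreover have "x \<in> T" unfolding T_def using e by (simp add: ereal_minus_less)
    moreover have "T \<subseteq> {x. c < f x + ereal (h x)}"
    proof
      fix w assume "w \<in> T"
      then have "c < ereal e + ereal (h w)" and "ereal e + ereal (h w) \<le> f w + ereal (h w)"
        unfolding T_def by (simp, intro add_right_mono) (simp add: less_imp_le)
      then show "w \<in> {x. c < f x + ereal (h x)}"
        using order_less_le_trans by blast
    qed
    ultimately show "\<exists>T. open T \<and> x \<in> T \<and> T \<subseteq> {x. c < f x + ereal (h x)}" by blast
  qed
  then show ?thesis by (simp add: lsc_fun_iff_open_superlevels)
qed

lemma lsc_fun_le_limit:
  fixes f :: "'a::topological_space \<Rightarrow> ereal" and r :: "nat \<Rightarrow> ereal"
  assumes "lsc_fun f" and "p \<longlonglongrightarrow> a" and "eventually (\<lambda>k. f (p k) \<le> r k) sequentially"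
    and "r \<longlonglongrightarrow> r0"
  shows "f a \<le> r0"
proof (rule ccontr)
  assume "\<not> f a \<le> r0"
  then obtain c where c: "r0 < c" "c < f a" using dense not_le_imp_less by metis
  have "open {x. c < f x}" using assms(1) by (simp add: lsc_fun_iff_open_superlevels)
  then have "eventually (\<lambda>k. p k \<in> {x. c < f x}) sequentially"
    using c(2) by (intro topological_tendstoD[OF assms(2)]) simp_all
  moreover have "eventually (\<lambda>k. r k < c) sequentially" using assms(4) c(1) by (rule order_tendstoD)
  ultimately have "eventually (\<lambda>k. False) sequentially"
    using assms(3) by eventually_elim (use order.strict_trans1 in fastforce)
  then show False by simp
qed

lemma lsc_fun_attains_min:
  fixes h :: "'a::topological_space \<Rightarrow> ereal"
  assumes "lsc_fun h" and "compact K" and "K \<noteq> {}"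
  shows "\<exists>y\<in>K. \<forall>w\<in>K. h y \<le> h w"
proof (rule ccontr)
  assume no_min: "\<not> ?thesis"
  define m where "m = (INF w\<in>K. h w)"
  have m_le: "m \<le> h w" if "w \<in> K" for w unfolding m_def using that by (rule INF_lower)
  have m_less: "m < h y" if y: "y \<in> K" for y
  proof -
    have "m \<noteq> h y"
    proof
      assume "m = h y"
      then have "\<forall>w\<in>K. h y \<le> h w" using m_le by simp
      with no_min y show False by blast
    qed
    with m_le[OF y] show ?thesis by simp
  qed
  have cover: "K \<subseteq> (\<Union>c\<in>{c. m < c}. {x. c < h x})"
  proof
    fix y assume "y \<in> K"
    then obtain c where "m < c" "c < h y" using dense[OF m_less] by blast
    then show "y \<in> (\<Union>c\<in>{c. m < c}. {x. c < h x})" by blast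
  qed
  have superlevel_open: "open {x. c < h x}" for c
    using assms(1) by (simp add: lsc_fun_iff_open_superlevels)
  obtain D where D: "D \<subseteq> {c. m < c}" "finite D" "K \<subseteq> (\<Union>c\<in>D. {x. c < h x})"
    using compactE_image[OF assms(2) superlevel_open cover] .
  with assms(3) have "D \<noteq> {}" by auto
  have "Min D \<le> h w" if w: "w \<in> K" for w
  proof -
    obtain c where "c \<in> D" "c < h w" using D(3) w by blast
    then show ?thesis using Min_le[OF D(2)] by (meson order_le_less_trans less_imp_le)
  qed
  then have "Min D \<le> m" unfolding m_def by (rule INF_greatest)
  moreover have "m < Min D" using D(1) Min_in[OF D(2) \<open>D \<noteq> {}\<close>] by blast
  ultimately show False by simp
qed

lemma asymptotic_segment_tendsto:
  fixes x :: "'a::real_normed_vector"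
  assumes "filterlim N at_top sequentially" and "(\<lambda>k. (1 / N k) *\<^sub>R y k) \<longlonglongrightarrow> d"
  shows "(\<lambda>k. (t / N k) *\<^sub>R y k + (1 - t / N k) *\<^sub>R x) \<longlonglongrightarrow> x + t *\<^sub>R d"
proof -
  have "(\<lambda>k. t / N k) \<longlonglongrightarrow> 0"
    by (rule tendsto_divide_0[OF tendsto_const filterlim_at_top_imp_at_infinity[OF assms(1)]])
  then have "(\<lambda>k. t *\<^sub>R ((1 / N k) *\<^sub>R y k) + (1 - t / N k) *\<^sub>R x) \<longlonglongrightarrow> t *\<^sub>R d + (1 - 0) *\<^sub>R x"
    by (intro tendsto_intros assms(2))
  then show ?thesis by (simp add: add.commute)
qed

lemma eventually_ratio_in_unit_interval:
  assumes "filterlim N at_top sequentially" and "(t::real) \<ge> 0"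
  shows "eventually (\<lambda>k. 0 \<le> t / N k \<and> t / N k \<le> 1) sequentially"
proof -
  have "eventually (\<lambda>k. t + 1 \<le> N k) sequentially"
    using assms(1) unfolding filterlim_at_top by blast
  then show ?thesis by eventually_elim (use assms(2) in auto)
qed

lemma asymptotic_cone_recession:
  fixes X :: "'a::real_normed_vector set"
  assumes "closed X" and "convex X" and "x \<in> X" and "d \<in> asymptotic_cone X" and "t \<ge> 0"
  shows "x + t *\<^sub>R d \<in> X"
proof -
  obtain N y where N: "filterlim N at_top sequentially" and y: "\<forall>k. y k \<in> X"
    and lim: "(\<lambda>k. (1 / N k) *\<^sub>R y k) \<longlonglongrightarrow> d"
    using assms(4) unfolding asymptotic_cone_def by blast
  have "eventually (\<lambda>k. (t / N k) *\<^sub>R y k + (1 - t / N k) *\<^sub>R x \<in> X) sequentially"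
    using eventually_ratio_in_unit_interval[OF N assms(5)]
    by eventually_elim (use y in \<open>auto intro: convexD[OF assms(2) _ assms(3)]\<close>)
  then show ?thesis
    by (rule Lim_in_closed_set[OF assms(1) _ sequentially_bot asymptotic_segment_tendsto[OF N lim]])
qed

lemma zero_in_asymptotic_cone:
  assumes "x \<in> X"
  shows "0 \<in> asymptotic_cone X"
  unfolding asymptotic_cone_def
proof (intro CollectI exI conjI)
  show "filterlim real at_top sequentially" by (rule filterlim_real_sequentially)
  show "\<forall>k. x \<in> X" using assms by simp
  show "(\<lambda>k. (1 / real k) *\<^sub>R x) \<longlonglongrightarrow> 0"
    using tendsto_scaleR[OF lim_const_over_n[of 1] tendsto_const[of x]] by simp
qed

lemma proper_fun_edom_real:
  assumes "proper_fun f" and "x \<in> edom f"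
  obtains a where "f x = ereal a"
  using assms unfolding proper_fun_def edom_def by (cases "f x") auto

lemma Kq_iff:
  fixes f :: "'a::real_vector \<Rightarrow> ereal"
  assumes "proper_fun f"
  shows "d \<in> Kq f \<longleftrightarrow> (\<forall>x\<in>edom f. \<forall>t>0. f (x + t *\<^sub>R d) \<le> f x)"
proof -
  have "(f (x + t *\<^sub>R d) - f x) / ereal t \<le> 0 \<longleftrightarrow> f (x + t *\<^sub>R d) \<le> f x"
    if x: "x \<in> edom f" and "t > 0" for x t
  proof -
    obtain a where a: "f x = ereal a" using proper_fun_edom_real[OF assms x] .
    show ?thesis
      using \<open>t > 0\<close> by (cases "f (x + t *\<^sub>R d)") (auto simp: a divide_le_0_iff)
  qed
  then show ?thesis unfolding Kq_def q_asymptotic_def by (auto simp: SUP_le_iff)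
qed

lemma f_tilt_eq_add: "f_tilt f v = (\<lambda>x. f x + ereal (inner (- v) x))"
  by (simp add: f_tilt_def fun_eq_iff minus_ereal_def)

lemma edom_f_tilt [simp]: "edom (f_tilt f v) = edom f"
proof -
  have "f x - ereal c < \<infinity> \<longleftrightarrow> f x < \<infinity>" for x c by (cases "f x") auto
  then show ?thesis by (auto simp: edom_def f_tilt_def)
qed

lemma Sol_monotone:
  assumes "proper_fun f" and "X \<subseteq> edom f" and "x \<in> Sol f X v" and "y \<in> Sol f X u"
  shows "0 \<le> inner (u - v) (y - x)"
proof -
  have "x \<in> X" "y \<in> X" using assms(3,4) by (auto simp: Sol_def)
  then obtain a b where a: "f x = ereal a" and b: "f y = ereal b"
    using proper_fun_edom_real[OF assms(1)] assms(2) by (metis subsetD)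
  have "a - inner v x \<le> b - inner v y" "b - inner u y \<le> a - inner u x"
    using assms(3,4) \<open>x \<in> X\<close> \<open>y \<in> X\<close> unfolding Sol_def f_tilt_def by (auto simp: a b)
  then show ?thesis by (simp add: inner_diff_left inner_diff_right)
qed

lemma Sol_nonempty_imp_inner_nonpos:
  fixes f :: "'a::real_inner \<Rightarrow> ereal"
  assumes "proper_fun f" and "closed X" and "convex X" and "X \<subseteq> edom f"
    and "Sol f X u \<noteq> {}" and "d \<in> asymptotic_cone X" and "d \<in> Kq f"
  shows "inner u d \<le> 0"
proof -
  obtain y where y: "y \<in> Sol f X u" using assms(5) by blast
  then have "y \<in> X" by (simp add: Sol_def)
  then have "y + d \<in> X" using asymptotic_cone_recession[OF assms(2,3) _ assms(6), of y 1] by simp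
  obtain a b where a: "f y = ereal a" and b: "f (y + d) = ereal b"
    using proper_fun_edom_real[OF assms(1)] assms(4) \<open>y \<in> X\<close> \<open>y + d \<in> X\<close> by (metis subsetD)
  have "f (y + d) \<le> f y"
    using assms(4,7) \<open>y \<in> X\<close> unfolding Kq_iff[OF assms(1)] by (metis scaleR_one subsetD zero_less_one)
  then have "b \<le> a" by (simp add: a b)
  moreover have "f_tilt f u y \<le> f_tilt f u (y + d)" using y \<open>y + d \<in> X\<close> by (simp add: Sol_def)
  then have "a - inner u y \<le> b - inner u (y + d)" by (simp add: a b f_tilt_def)
  ultimately show ?thesis by (simp add: inner_add_right)
qed

lemma lsc_setvalued_at_ray:
  fixes F :: "'b::real_normed_vector \<Rightarrow> 'a::topological_space set"
  assumes "lsc_setvalued_at F 0" and "open V" and "F 0 \<inter> V \<noteq> {}"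
  obtains \<epsilon> where "\<epsilon> > 0" and "F (\<epsilon> *\<^sub>R d) \<inter> V \<noteq> {}"
proof -
  obtain U where "open U" "0 \<in> U" and U: "\<forall>u\<in>U. F u \<inter> V \<noteq> {}"
    using assms unfolding lsc_setvalued_at_def by blast
  then obtain e where "e > 0" and e: "ball 0 e \<subseteq> U" using open_contains_ball by blast
  define \<epsilon> where "\<epsilon> = e / 2 / (norm d + 1)"
  have "norm d + 1 > 0" by (simp add: add_nonneg_pos)
  then have "\<epsilon> > 0" unfolding \<epsilon>_def using \<open>e > 0\<close> by simp
  have "norm (\<epsilon> *\<^sub>R d) \<le> \<epsilon> * (norm d + 1)" using \<open>\<epsilon> > 0\<close> by simp
  also have "\<dots> = e / 2" unfolding \<epsilon>_def using \<open>norm d + 1 > 0\<close> by (simp add: field_simps)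
  also have "\<dots> < e" using \<open>e > 0\<close> by simp
  finally have "\<epsilon> *\<^sub>R d \<in> U" using e by auto
  with U show thesis by (intro that[OF \<open>\<epsilon> > 0\<close>]) blast
qed

lemma Sol_singleton_if_lsc:
  fixes f :: "'a::real_inner \<Rightarrow> ereal"
  assumes "proper_fun f" and "X \<subseteq> edom f" and "lsc_setvalued_at (Sol f X) 0"
  shows "\<exists>z. Sol f X 0 = {z}"
proof -
  obtain x1 where x1: "x1 \<in> Sol f X 0" using assms(3) unfolding lsc_setvalued_at_def by blast
  have "x2 = x1" if x2: "x2 \<in> Sol f X 0" for x2
  proof (rule ccontr)
    assume "x2 \<noteq> x1"
    define d where "d = x1 - x2"
    have "norm d > 0" using \<open>x2 \<noteq> x1\<close> by (simp add: d_def)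
    then have "Sol f X 0 \<inter> ball x2 (norm d / 2) \<noteq> {}" using x2 by auto
    then obtain \<epsilon> where "\<epsilon> > 0" and "Sol f X (\<epsilon> *\<^sub>R d) \<inter> ball x2 (norm d / 2) \<noteq> {}"
      using lsc_setvalued_at_ray[OF assms(3) open_ball] by blast
    then obtain y where y: "y \<in> Sol f X (\<epsilon> *\<^sub>R d)" and "dist x2 y < norm d / 2" by auto
    then have close: "norm (y - x2) < norm d / 2" by (simp add: dist_norm norm_minus_commute)
    have "0 \<le> inner (\<epsilon> *\<^sub>R d) (y - x1)" using Sol_monotone[OF assms(1,2) x1 y] by simp
    then have "0 \<le> inner d (y - x1)" using \<open>\<epsilon> > 0\<close> by (simp add: zero_le_mult_iff)
    also have "inner d (y - x1) = inner d (y - x2) - norm d ^ 2"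
      by (simp add: d_def inner_diff_right power2_norm_eq_inner algebra_simps)
    also have "inner d (y - x2) \<le> norm d * norm (y - x2)"
      using norm_cauchy_schwarz by blast
    finally have "norm d * norm d \<le> norm d * norm (y - x2)" by (simp add: power2_eq_square)
    with \<open>norm d > 0\<close> have "norm d \<le> norm (y - x2)" by simp
    with \<open>norm d > 0\<close> close show False by linarith
  qed
  with x1 show ?thesis by blast
qed

lemma asymptotic_cone_Kq_trivial_if_lsc:
  fixes f :: "'a::real_inner \<Rightarrow> ereal"
  assumes "proper_fun f" and "closed X" and "convex X" and "X \<subseteq> edom f"
    and "lsc_setvalued_at (Sol f X) 0"
  shows "asymptotic_cone X \<inter> Kq f = {0}"
proof -
  have "d = 0" if d: "d \<in> asymptotic_cone X" "d \<in> Kq f" for d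
  proof -
    have "Sol f X 0 \<inter> UNIV \<noteq> {}" using assms(5) by (simp add: lsc_setvalued_at_def)
    then obtain \<epsilon> where "\<epsilon> > 0" and "Sol f X (\<epsilon> *\<^sub>R d) \<noteq> {}"
      using lsc_setvalued_at_ray[OF assms(5) open_UNIV] by auto
    then have "inner (\<epsilon> *\<^sub>R d) d \<le> 0"
      using Sol_nonempty_imp_inner_nonpos[OF assms(1-4) _ d] by blast
    with \<open>\<epsilon> > 0\<close> have "inner d d \<le> 0" by (simp add: mult_le_0_iff)
    then show "d = 0" by (metis inner_gt_zero_iff not_less)
  qed
  moreover obtain x where "x \<in> Sol f X 0" using assms(5) unfolding lsc_setvalued_at_def by blast
  then have "0 \<in> asymptotic_cone X" by (intro zero_in_asymptotic_cone[of x]) (simp add: Sol_def)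
  moreover have "0 \<in> Kq f" by (simp add: Kq_iff[OF assms(1)])
  ultimately show ?thesis by blast
qed

lemma quasiconvex_lsc_recession:
  fixes g :: "'a::real_normed_vector \<Rightarrow> ereal"
  assumes "lsc_fun g" and "quasiconvex_fun g" and "x \<in> edom g"
    and "filterlim N at_top sequentially" and "(\<lambda>k. (1 / N k) *\<^sub>R y k) \<longlonglongrightarrow> d"
    and "eventually (\<lambda>k. g (y k) \<le> g x) sequentially" and "t \<ge> 0"
  shows "g (x + t *\<^sub>R d) \<le> g x"
proof -
  have "eventually (\<lambda>k. g ((t / N k) *\<^sub>R y k + (1 - t / N k) *\<^sub>R x) \<le> g x) sequentially"
    using eventually_ratio_in_unit_interval[OF assms(4,7)] assms(6)
  proof eventually_elim
    case (elim k)
    moreover have "y k \<in> edom g" using elim(2) assms(3) unfolding edom_def by auto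
    ultimately have "g ((t / N k) *\<^sub>R y k + (1 - t / N k) *\<^sub>R x) \<le> max (g (y k)) (g x)"
      using assms(2,3) unfolding quasiconvex_fun_def by blast
    then show ?case using elim(2) by simp
  qed
  then show ?thesis
    by (rule lsc_fun_le_limit[OF assms(1) asymptotic_segment_tendsto[OF assms(4,5)] _ tendsto_const])
qed

lemma tilted_sublevel_eventually:
  fixes f :: "'a::real_inner \<Rightarrow> ereal"
  assumes "proper_fun f" and "\<forall>k. y k \<in> edom f" and "z \<in> edom f" and "x \<in> edom f"
    and "filterlim N at_top sequentially" and "(\<lambda>k. (1 / N k) *\<^sub>R y k) \<longlonglongrightarrow> d" and "u \<longlonglongrightarrow> 0"
    and "\<forall>k. f_tilt f (u k) (y k) \<le> f_tilt f (u k) z" and "0 < inner v d"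
  shows "eventually (\<lambda>k. f_tilt f v (y k) \<le> f_tilt f v x) sequentially"
proof -
  obtain a where a: "f x = ereal a" using proper_fun_edom_real[OF assms(1,4)] .
  obtain c where c: "f z = ereal c" using proper_fun_edom_real[OF assms(1,3)] .
  define b where "b k = real_of_ereal (f (y k))" for k
  have b: "f (y k) = ereal (b k)" for k
  proof -
    obtain r where "f (y k) = ereal r" using proper_fun_edom_real[OF assms(1)] assms(2) by blast
    then show ?thesis unfolding b_def by simp
  qed
  have optimal: "b k - inner (u k) (y k) \<le> c - inner (u k) z" for k
    using assms(8) by (simp add: f_tilt_def b c)
  \<comment> \<open>\<open>N k * E k\<close> bounds \<open>f_tilt f v (y k) - f_tilt f v x\<close> from above,
    and \<open>E k\<close> tends to \<open>-\<langle>v, d\<rangle> < 0\<close>.\<close>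
  define E where "E k = (c - a - inner (u k) z + inner v x) / N k + inner (u k - v) ((1 / N k) *\<^sub>R y k)" for k
  have "(\<lambda>k. c - a - inner (u k) z + inner v x) \<longlonglongrightarrow> c - a - inner 0 z + inner v x"
    by (intro tendsto_intros assms(7))
  then have "(\<lambda>k. (c - a - inner (u k) z + inner v x) / N k) \<longlonglongrightarrow> 0"
    by (rule tendsto_divide_0[OF _ filterlim_at_top_imp_at_infinity[OF assms(5)]])
  then have "E \<longlonglongrightarrow> 0 + inner (0 - v) d" unfolding E_def by (intro tendsto_intros assms(6,7))
  moreover have "0 + inner (0 - v) d < 0" using assms(9) by simp
  ultimately have "eventually (\<lambda>k. E k < 0) sequentially" by (rule order_tendstoD(2))
  moreover have "eventually (\<lambda>k. 0 < N k) sequentially"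
    using assms(5) by (simp add: filterlim_at_top_dense)
  ultimately show ?thesis
  proof eventually_elim
    case (elim k)
    then have "N k * E k < 0" by (simp add: mult_pos_neg)
    also have "N k * E k = c - a - inner (u k) z + inner v x + inner (u k - v) (y k)"
      unfolding E_def using elim(2) by (simp add: field_simps)
    finally have "b k - inner v (y k) < a - inner v x"
      using optimal[of k] by (simp add: inner_diff_left)
    then show ?case by (simp add: f_tilt_def a b)
  qed
qed

lemma asymptotic_direction_in_Kq:
  fixes f :: "'a::real_inner \<Rightarrow> ereal"
  assumes "proper_fun f" and "lsc_fun f" and "robustly_quasiconvex \<alpha> f" and "\<alpha> > 0"
    and "\<forall>k. y k \<in> edom f" and "z \<in> edom f"
    and "filterlim N at_top sequentially" and "(\<lambda>k. (1 / N k) *\<^sub>R y k) \<longlonglongrightarrow> d" and "d \<noteq> 0"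
    and "u \<longlonglongrightarrow> 0" and "\<forall>k. f_tilt f (u k) (y k) \<le> f_tilt f (u k) z"
  shows "d \<in> Kq f"
  unfolding Kq_iff[OF assms(1)]
proof (intro ballI allI impI)
  fix x and t :: real assume x: "x \<in> edom f" and "t > 0"
  obtain a where a: "f x = ereal a" using proper_fun_edom_real[OF assms(1) x] .
  show "f (x + t *\<^sub>R d) \<le> f x"
  proof (rule ereal_le_epsilon2)
    fix e :: real assume "e > 0"
    define s where "s = min (\<alpha> / 2) (e / (t * norm d))"
    define v where "v = (s / norm d) *\<^sub>R d"
    have "s > 0" unfolding s_def using \<open>e > 0\<close> \<open>t > 0\<close> assms(4,9) by simp
    have vd: "inner v d = s * norm d"
      unfolding v_def using assms(9) by (simp add: power2_norm_eq_inner[symmetric] power2_eq_square)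
    have "- v \<in> ball 0 \<alpha>"
      unfolding v_def using assms(4,9) \<open>s > 0\<close> by (simp add: s_def min_less_iff_disj)
    then have "quasiconvex_fun (f_tilt f v)"
      using assms(3) unfolding robustly_quasiconvex_def f_tilt_eq_add by blast
    moreover have "lsc_fun (f_tilt f v)"
      unfolding f_tilt_eq_add by (intro lsc_fun_add_continuous assms(2) continuous_intros)
    moreover have "eventually (\<lambda>k. f_tilt f v (y k) \<le> f_tilt f v x) sequentially"
      using \<open>s > 0\<close> assms(9) vd
      by (intro tilted_sublevel_eventually[OF assms(1,5,6) x assms(7,8,10,11)]) simp
    ultimately have "f_tilt f v (x + t *\<^sub>R d) \<le> f_tilt f v x"
      using x \<open>t > 0\<close> by (intro quasiconvex_lsc_recession[OF _ _ _ assms(7,8)]) simp_all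
    then have "f (x + t *\<^sub>R d) \<le> ereal (a + t * inner v d)"
      by (cases "f (x + t *\<^sub>R d)") (simp_all add: f_tilt_def a inner_add_right)
    also have "t * inner v d \<le> e"
    proof -
      have "s \<le> e / (t * norm d)" unfolding s_def by simp
      with \<open>t > 0\<close> assms(9) have "s * (t * norm d) \<le> e" by (simp add: pos_le_divide_eq)
      then show ?thesis by (simp add: vd mult.left_commute)
    qed
    then have "ereal (a + t * inner v d) \<le> ereal (a + e)" by simp
    finally show "f (x + t *\<^sub>R d) \<le> f x + ereal e" by (simp add: a)
  qed
qed

lemma bounded_tilted_sublevels:
  fixes f :: "'a::euclidean_space \<Rightarrow> ereal"
  assumes "proper_fun f" and "lsc_fun f" and "robustly_quasiconvex \<alpha> f" and "\<alpha> > 0"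
    and "X \<subseteq> edom f" and "z \<in> X" and "asymptotic_cone X \<inter> Kq f = {0}"
  shows "\<exists>\<delta>>0. \<exists>R. \<forall>u y. norm u < \<delta> \<longrightarrow> y \<in> X \<longrightarrow> f_tilt f u y \<le> f_tilt f u z \<longrightarrow> norm y \<le> R"
proof (rule ccontr)
  assume "\<not> ?thesis"
  then have "\<forall>k::nat. \<exists>u y. norm u < 1 / real (Suc k) \<and> y \<in> X \<and>
      f_tilt f u y \<le> f_tilt f u z \<and> real k < norm y"
    by (metis not_le of_nat_0_less_iff zero_less_Suc zero_less_divide_1_iff)
  then obtain u y where u: "\<And>k. norm (u k) < 1 / real (Suc k)" and y: "\<And>k. y k \<in> X"
    and tilt: "\<And>k. f_tilt f (u k) (y k) \<le> f_tilt f (u k) z" and large: "\<And>k. real k < norm (y k)"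
    by metis
  define W where "W k = (1 / norm (y k)) *\<^sub>R y k" for k
  have "y k \<noteq> 0" for k using large[of k] by (metis norm_zero not_less of_nat_0_le_iff)
  then have "\<forall>k. W k \<in> sphere 0 1" by (simp add: W_def)
  then obtain d r where "d \<in> sphere 0 1" and "strict_mono r" and dir: "(W \<circ> r) \<longlonglongrightarrow> d"
    using seq_compactE[OF compact_imp_seq_compact[OF compact_sphere]] by blast
  define N where "N k = norm (y (r k))" for k
  have "real k \<le> N k" for k
    using seq_suble[OF \<open>strict_mono r\<close>, of k] large[of "r k"] unfolding N_def by linarith
  then have N: "filterlim N at_top sequentially"
    by (intro filterlim_at_top_mono[OF filterlim_real_sequentially]) auto
  have dir': "(\<lambda>k. (1 / N k) *\<^sub>R y (r k)) \<longlonglongrightarrow> d" using dir by (simp add: W_def N_def comp_def)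
  have "u \<longlonglongrightarrow> 0" by (rule LIMSEQ_norm_0) (use u in auto)
  then have "(u \<circ> r) \<longlonglongrightarrow> 0" by (rule LIMSEQ_subseq_LIMSEQ[OF _ \<open>strict_mono r\<close>])
  have "d \<in> asymptotic_cone X"
    unfolding asymptotic_cone_def using N y dir'
    by (intro CollectI exI[of _ N] exI[of _ "y \<circ> r"] conjI) auto
  moreover have "d \<in> Kq f"
    using \<open>d \<in> sphere 0 1\<close> assms(5,6) y tilt \<open>(u \<circ> r) \<longlonglongrightarrow> 0\<close> dir'
    by (intro asymptotic_direction_in_Kq[OF assms(1-4), of "y \<circ> r" z N d "u \<circ> r"] N) auto
  ultimately have "d = 0" using assms(7) by blast
  with \<open>d \<in> sphere 0 1\<close> show False by simp
qed

lemma Sol_meets_cball: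
  fixes f :: "'a::euclidean_space \<Rightarrow> ereal"
  assumes "lsc_fun f" and "closed X" and "z \<in> X"
    and bound: "\<And>y. y \<in> X \<Longrightarrow> f_tilt f u y \<le> f_tilt f u z \<Longrightarrow> norm y \<le> R"
  shows "Sol f X u \<inter> cball 0 R \<noteq> {}"
proof -
  define K where "K = X \<inter> cball 0 R"
  have "compact K" unfolding K_def using assms(2) by (intro closed_Int_compact) auto
  have "z \<in> K" unfolding K_def using bound[OF assms(3)] assms(3) by simp
  have "lsc_fun (f_tilt f u)"
    unfolding f_tilt_eq_add by (intro lsc_fun_add_continuous assms(1) continuous_intros)
  then obtain y where y: "y \<in> K" and min: "\<forall>w\<in>K. f_tilt f u y \<le> f_tilt f u w"
    using lsc_fun_attains_min[OF _ \<open>compact K\<close>] \<open>z \<in> K\<close> by blast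
  have "f_tilt f u y \<le> f_tilt f u w" if "w \<in> X" for w
  proof (cases "norm w \<le> R")
    case True
    with that min show ?thesis by (simp add: K_def)
  next
    case False
    with bound[OF that] have "f_tilt f u z \<le> f_tilt f u w" by (metis nle_le)
    with min \<open>z \<in> K\<close> show ?thesis by (metis order_trans)
  qed
  with y have "y \<in> Sol f X u \<inter> cball 0 R" by (simp add: Sol_def K_def)
  then show ?thesis by blast
qed

lemma Sol_closed_graph:
  fixes f :: "'a::real_inner \<Rightarrow> ereal"
  assumes "proper_fun f" and "lsc_fun f" and "closed X" and "X \<subseteq> edom f"
    and "u \<longlonglongrightarrow> u0" and "\<And>k. y k \<in> Sol f X (u k)" and "y \<longlonglongrightarrow> y0"
  shows "y0 \<in> Sol f X u0"
proof -
  have yX: "y k \<in> X" for k using assms(6) by (simp add: Sol_def)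
  then have "y0 \<in> X" using closed_sequentially[OF assms(3) _ assms(7)] by blast
  have "f_tilt f u0 y0 \<le> f_tilt f u0 w" if w: "w \<in> X" for w
  proof -
    obtain c where c: "f w = ereal c"
      using proper_fun_edom_real[OF assms(1)] w assms(4) by blast
    have le: "f (y k) \<le> ereal (c + inner (u k) (y k - w))" for k
    proof -
      obtain b where b: "f (y k) = ereal b"
        using proper_fun_edom_real[OF assms(1)] yX assms(4) by blast
      have "f_tilt f (u k) (y k) \<le> f_tilt f (u k) w" using assms(6)[of k] w by (simp add: Sol_def)
      then show ?thesis by (simp add: f_tilt_def b c inner_diff_right)
    qed
    have lim: "(\<lambda>k. ereal (c + inner (u k) (y k - w))) \<longlonglongrightarrow> ereal (c + inner u0 (y0 - w))"
      by (intro tendsto_intros assms(5,7))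
    have "f y0 \<le> ereal (c + inner u0 (y0 - w))"
      by (rule lsc_fun_le_limit[OF assms(2,7) always_eventually lim]) (simp add: le)
    then show ?thesis by (cases "f y0") (simp_all add: f_tilt_def c inner_diff_right)
  qed
  with \<open>y0 \<in> X\<close> show ?thesis by (simp add: Sol_def)
qed

lemma lsc_setvalued_at_if_closed_graph:
  fixes F :: "'b::metric_space \<Rightarrow> 'a::metric_space set"
  assumes "F ub = {z}" and "open U" and "ub \<in> U" and "compact K"
    and meets: "\<And>u. u \<in> U \<Longrightarrow> F u \<inter> K \<noteq> {}"
    and closed_graph: "\<And>u y y0. u \<longlonglongrightarrow> ub \<Longrightarrow> (\<And>k. y k \<in> F (u k)) \<Longrightarrow> y \<longlonglongrightarrow> y0 \<Longrightarrow> y0 \<in> F ub"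
  shows "lsc_setvalued_at F ub"
  unfolding lsc_setvalued_at_def
proof (intro conjI allI impI)
  show "F ub \<noteq> {}" using assms(1) by simp
  fix V assume V: "open V \<and> F ub \<inter> V \<noteq> {}"
  then have "z \<in> V" using assms(1) by simp
  show "\<exists>U'. open U' \<and> ub \<in> U' \<and> (\<forall>u\<in>U'. F u \<inter> V \<noteq> {})"
  proof (rule ccontr)
    assume "\<not> ?thesis"
    then have escape: "\<And>U'. open U' \<Longrightarrow> ub \<in> U' \<Longrightarrow> \<exists>u\<in>U'. F u \<inter> V = {}" by blast
    have "\<exists>u. u \<in> U \<and> dist u ub < inverse (real (Suc k)) \<and> F u \<inter> V = {}" for k
    proof -
      have "ub \<in> U \<inter> ball ub (inverse (real (Suc k)))" using assms(3) by simp
      then obtain u where "u \<in> U \<inter> ball ub (inverse (real (Suc k)))" and "F u \<inter> V = {}"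
        using escape[OF open_Int[OF assms(2) open_ball]] by blast
      then show ?thesis by (intro exI[of _ u]) (simp add: dist_commute)
    qed
    then obtain u where u: "\<And>k. u k \<in> U" and near: "\<And>k. dist (u k) ub < inverse (real (Suc k))"
      and avoid: "\<And>k. F (u k) \<inter> V = {}"
      by metis
    have "\<forall>k. norm (dist (u k) ub) \<le> inverse (real (Suc k))" using near by (simp add: less_imp_le)
    then have "(\<lambda>k. dist (u k) ub) \<longlonglongrightarrow> 0"
      by (rule Lim_null_comparison[OF always_eventually LIMSEQ_inverse_real_of_nat])
    then have "u \<longlonglongrightarrow> ub" by (rule tendsto_dist_iff[THEN iffD2])
    have "\<forall>k. \<exists>y. y \<in> F (u k) \<inter> K" using meets[OF u] by blast
    then obtain y where y: "\<And>k. y k \<in> F (u k) \<inter> K" by metis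
    then have "\<forall>k. y k \<in> K - V" using avoid by blast
    moreover have "compact (K - V)" using assms(4) V by (intro compact_diff) auto
    ultimately obtain y0 r where "y0 \<in> K - V" and "strict_mono r" and "(y \<circ> r) \<longlonglongrightarrow> y0"
      using seq_compactE[OF compact_imp_seq_compact] by blast
    have "(u \<circ> r) \<longlonglongrightarrow> ub" by (rule LIMSEQ_subseq_LIMSEQ[OF \<open>u \<longlonglongrightarrow> ub\<close> \<open>strict_mono r\<close>])
    then have "y0 \<in> F ub" using y \<open>(y \<circ> r) \<longlonglongrightarrow> y0\<close> by (intro closed_graph[of "u \<circ> r"]) auto
    with assms(1) \<open>z \<in> V\<close> \<open>y0 \<in> K - V\<close> show False by simp
  qed
qed

lemma lsc_Sol_if_unique_and_no_recession:
  fixes f :: "'a::euclidean_space \<Rightarrow> ereal"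
  assumes "proper_fun f" and "lsc_fun f" and "closed X" and "X \<subseteq> edom f"
    and "robustly_quasiconvex \<alpha> f" and "\<alpha> > 0"
    and "Sol f X 0 = {z}" and "asymptotic_cone X \<inter> Kq f = {0}"
  shows "lsc_setvalued_at (Sol f X) 0"
proof -
  have "z \<in> X" using assms(7) by (auto simp: Sol_def)
  obtain \<delta> R where "\<delta> > 0" and bound:
    "\<forall>u y. norm u < \<delta> \<longrightarrow> y \<in> X \<longrightarrow> f_tilt f u y \<le> f_tilt f u z \<longrightarrow> norm y \<le> R"
    using bounded_tilted_sublevels[OF assms(1,2,5,6,4) \<open>z \<in> X\<close> assms(8)] by blast
  show ?thesis
  proof (rule lsc_setvalued_at_if_closed_graph[where F = "Sol f X" and ub = 0 and U = "ball 0 \<delta>" and K = "cball 0 R"])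
    show "Sol f X 0 = {z}" by (rule assms(7))
    show "0 \<in> ball 0 \<delta>" using \<open>\<delta> > 0\<close> by simp
    show "Sol f X u \<inter> cball 0 R \<noteq> {}" if u: "u \<in> ball 0 \<delta>" for u
      using u bound by (intro Sol_meets_cball[OF assms(2,3) \<open>z \<in> X\<close>]) auto
    show "y0 \<in> Sol f X 0" if "u \<longlonglongrightarrow> 0" "\<And>k. y k \<in> Sol f X (u k)" "y \<longlonglongrightarrow> y0" for u y y0
      using Sol_closed_graph[OF assms(1-4) that] .
  qed simp_all
qed

theorem mainTheorem12:
  fixes f :: "'a::euclidean_space \<Rightarrow> ereal" and X :: "'a set" and \<alpha> :: real
  assumes "proper_fun f" and "lsc_fun f"
    and "closed X" and "X \<noteq> {}" and "\<not> bounded (edom f \<inter> X)"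
    and "convex X" and "\<alpha> > 0" and "robustly_quasiconvex \<alpha> f"
    and "X \<subseteq> edom f"
  shows "lsc_setvalued_at (Sol f X) 0 \<longleftrightarrow>
           ((\<exists>z. Sol f X 0 = {z}) \<and> asymptotic_cone X \<inter> Kq f = {0})"
proof
  assume "lsc_setvalued_at (Sol f X) 0"
  then show "(\<exists>z. Sol f X 0 = {z}) \<and> asymptotic_cone X \<inter> Kq f = {0}"
    using Sol_singleton_if_lsc asymptotic_cone_Kq_trivial_if_lsc assms(1,3,6,9) by blast
next
  assume "(\<exists>z. Sol f X 0 = {z}) \<and> asymptotic_cone X \<inter> Kq f = {0}"
  then show "lsc_setvalued_at (Sol f X) 0"
    using lsc_Sol_if_unique_and_no_recession[OF assms(1-3,9,8,7)] by blast
qed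

end
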